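(* Let $H=u^\perp+t_0u$ be a hyperplane in $\mathbb{R}^n$ and let $\diamond\in\mathcal J_H(\mathcal K^n_n)$. If $\varphi_\diamond\notin\mathcal I$, then $\diamond$ cannot be weakly approximated on $\mathcal K^n_n$ by finite compositions of polarizations with respect to hyperplanes parallel to $H$.
   Context: $\mathcal K^n_n$: convex bodies in $\mathbb{R}^n$, $n\ge2$. $\mathcal J_H(\mathcal K^n_n)$: maps $\diamond:\mathcal K^n_n\to\mathcal L^n$ (measurable sets of finite measure) that are monotonic up to null sets, measure preserving, map balls to balls (up to null sets), and respect $H$-cylinders (if $A\subset(B(x,r)\cap H)+H^\perp$ essentially then $\diamond A\subset(B(x,r)\cap H)+H^\perp$ essentially). For such $\diamond$, $\varphi_\diamond:\mathbb{R}\to\mathbb{R}$ is the contraction with $\diamond B(x+tu,r)=B(x+\varphi_\diamond(t)u,r)$ essentially for all $x\in u^\perp$, $t\in\mathbb{R}$, $r>0$. $\mathcal I$ is the class of contractions $\varphi:\mathbb{R}\to\mathbb{R}$ such that whenever $a<b$ and $\varphi(s)$ lies strictly between $\varphi(a)$ and $\varphi(b)$ for all $s\in(a,b)$ (the open interval between them, empty if $\varphi(a)=\varphi(b)$), the restriction of $\varphi$ to $(a,b)$ is affine with slope $\pm1$. Polarizations may have either orientation. Weak approximability on $\mathcal E$ by maps in $\mathcal G$: for every $A\in\mathcal E$ there are $\diamond_{A,k}\in\mathcal G$ with $\|1_{\diamond_{A,k}A}-1_{\diamond A}\|_1\to0$. *)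

theory Defs
  imports "HOL-Analysis.Analysis"
begin

definition convex_bodies :: "'a::euclidean_space set set" where
  "convex_bodies = {K. compact K \<and> convex K \<and> interior K \<noteq> {}}"

definition finite_measure_sets :: "'a::euclidean_space set set" where
  "finite_measure_sets = {A. A \<in> sets lebesgue \<and> emeasure lebesgue A < \<infinity>}"

definition ess_subset :: "'a::euclidean_space set \<Rightarrow> 'a set \<Rightarrow> bool" where
  "ess_subset A B \<longleftrightarrow> A - B \<in> null_sets lebesgue"

definition ess_eq :: "'a::euclidean_space set \<Rightarrow> 'a set \<Rightarrow> bool" where
  "ess_eq A B \<longleftrightarrow> ess_subset A B \<and> ess_subset B A"

definition hyperplane :: "'a::euclidean_space \<Rightarrow> real \<Rightarrow> 'a set" where
  "hyperplane u t0 = {y. u \<bullet> y = t0}"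

definition H_cylinder :: "'a::euclidean_space \<Rightarrow> real \<Rightarrow> 'a \<Rightarrow> real \<Rightarrow> 'a set" where
  "H_cylinder u t0 x r = {z + s *\<^sub>R u | z s. z \<in> cball x r \<inter> hyperplane u t0}"

definition in_J_H :: "'a::euclidean_space \<Rightarrow> real \<Rightarrow> ('a set \<Rightarrow> 'a set) \<Rightarrow> bool" where
  "in_J_H u t0 D \<longleftrightarrow>
     (\<forall>K\<in>convex_bodies. D K \<in> finite_measure_sets) \<and>
     (\<forall>K\<in>convex_bodies. \<forall>L\<in>convex_bodies. K \<subseteq> L \<longrightarrow> ess_subset (D K) (D L)) \<and>
     (\<forall>K\<in>convex_bodies. emeasure lebesgue (D K) = emeasure lebesgue K) \<and>
     (\<forall>x r. r > 0 \<longrightarrow> (\<exists>y s. s > 0 \<and> ess_eq (D (cball x r)) (cball y s))) \<and>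
     (\<forall>A\<in>convex_bodies. \<forall>x r. r > 0 \<longrightarrow>
        ess_subset A (H_cylinder u t0 x r) \<longrightarrow> ess_subset (D A) (H_cylinder u t0 x r))"

definition contraction :: "(real \<Rightarrow> real) \<Rightarrow> bool" where
  "contraction \<phi> \<longleftrightarrow> (\<forall>s t. \<bar>\<phi> s - \<phi> t\<bar> \<le> \<bar>s - t\<bar>)"

text \<open>\<open>is_phi_of u D \<phi>\<close>: \<open>\<phi>\<close> is the contraction \<open>\<phi>_D\<close> associated with \<open>D\<close>
  (it is uniquely determined by this property).\<close>
definition is_phi_of :: "'a::euclidean_space \<Rightarrow> ('a set \<Rightarrow> 'a set) \<Rightarrow> (real \<Rightarrow> real) \<Rightarrow> bool" where
  "is_phi_of u D \<phi> \<longleftrightarrow> contraction \<phi> \<and>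
     (\<forall>x t r. u \<bullet> x = 0 \<longrightarrow> r > 0 \<longrightarrow>
        ess_eq (D (cball (x + t *\<^sub>R u) r)) (cball (x + \<phi> t *\<^sub>R u) r))"

definition class_I :: "(real \<Rightarrow> real) set" where
  "class_I = {\<phi>. contraction \<phi> \<and>
     (\<forall>a b. a < b \<longrightarrow>
        (\<forall>s\<in>{a<..<b}. min (\<phi> a) (\<phi> b) < \<phi> s \<and> \<phi> s < max (\<phi> a) (\<phi> b)) \<longrightarrow>
        (\<exists>\<sigma> c. (\<sigma> = 1 \<or> \<sigma> = -1) \<and> (\<forall>s\<in>{a<..<b}. \<phi> s = \<sigma> * s + c)))}"

text \<open>Reflection in the hyperplane {y. v \<bullet> y = c} (v a unit vector).\<close>
definition refl_hp :: "'a::euclidean_space \<Rightarrow> real \<Rightarrow> 'a \<Rightarrow> 'a" where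
  "refl_hp v c y = y - (2 * (v \<bullet> y - c)) *\<^sub>R v"

definition polarization :: "'a::euclidean_space \<Rightarrow> real \<Rightarrow> 'a set \<Rightarrow> 'a set" where
  "polarization v c A =
     {y. (v \<bullet> y \<ge> c \<and> (y \<in> A \<or> refl_hp v c y \<in> A)) \<or>
         (v \<bullet> y < c \<and> y \<in> A \<and> refl_hp v c y \<in> A)}"

definition parallel_polarizations :: "'a::euclidean_space \<Rightarrow> ('a set \<Rightarrow> 'a set) set" where
  "parallel_polarizations u = {polarization v c | v c. v = u \<or> v = - u}"

definition polarization_compositions :: "'a::euclidean_space \<Rightarrow> ('a set \<Rightarrow> 'a set) set" where
  "polarization_compositions u =
     {foldr (\<circ>) ps id | ps. ps \<noteq> [] \<and> set ps \<subseteq> parallel_polarizations u}"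

definition weakly_approximable ::
  "'a::euclidean_space set set \<Rightarrow> ('a set \<Rightarrow> 'a set) \<Rightarrow> ('a set \<Rightarrow> 'a set) set \<Rightarrow> bool" where
  "weakly_approximable E D G \<longleftrightarrow>
     (\<forall>A\<in>E. \<exists>Dk :: nat \<Rightarrow> 'a set \<Rightarrow> 'a set. (\<forall>k. Dk k \<in> G) \<and>
        ((\<lambda>k. \<integral>\<^sup>+ x. ennreal \<bar>indicator (Dk k A) x - indicator (D A) x\<bar> \<partial>lebesgue)
           \<longlonglongrightarrow> 0))"

end

theory Submission
  imports Defs
begin

text \<open>
  Take a unit vector \<open>e \<bottom> u\<close> and work in the plane spanned by \<open>e\<close> and \<open>u\<close>. A polarization
  in a hyperplane parallel to \<open>H\<close> acts on the \<open>u\<close>-coordinate of a point by folding the line, so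
  a composition \<open>P\<close> of them maps the tube \<open>A\<close> around the diagonal \<open>{(s, s)}\<close> into the tube
  around the graph of a composition \<open>\<psi>\<close> of folds. Such \<open>\<psi>\<close> are contractions with slope \<open>\<plusminus>1\<close>
  on every interval on which they stay strictly between their endpoint values. Since
  \<open>\<phi> \<notin> \<I>\<close>, there is an interval \<open>[a, b]\<close> on which \<open>\<phi>\<close> stays strictly between its endpoint
  values without being affine of slope \<open>\<plusminus>1\<close>, so its average slope there has modulus \<open>< 1\<close>;
  compactness yields an \<open>\<epsilon>\<close>, independent of \<open>\<psi>\<close>, with \<open>|\<psi> s - \<phi> s| > \<epsilon>\<close> for some
  \<open>s \<in> [a, b]\<close>. A small ball centred at \<open>(s, s)\<close> lies in \<open>A\<close>; \<open>\<diamond>\<close> moves it to the ball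
  centred at \<open>(s, \<phi> s)\<close>, which lies in \<open>\<diamond>A\<close> but misses \<open>P A\<close>. So
  \<open>\<parallel>1\<^bsub>P A\<^esub> - 1\<^bsub>\<diamond>A\<^esub>\<parallel>\<^sub>1\<close> is bounded below by the volume of that ball.
\<close>

section \<open>Folds and functions with unit slope on stretches\<close>

definition fold_map :: "real \<Rightarrow> real \<Rightarrow> real \<Rightarrow> real" where
  "fold_map d \<sigma> m = d + \<sigma> * \<bar>m - d\<bar>"

inductive fold_composition :: "(real \<Rightarrow> real) \<Rightarrow> bool" where
  fold_composition_id: "fold_composition id"
| fold_composition_fold: "fold_composition \<psi> \<Longrightarrow> \<sigma> \<in> {1, -1} \<Longrightarrow> fold_composition (\<psi> \<circ> fold_map d \<sigma>)"

lemma fold_composition_fold_left: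
  assumes "fold_composition \<psi>" and \<sigma>: "\<sigma> \<in> {1, -1}"
  shows "fold_composition (fold_map d \<sigma> \<circ> \<psi>)"
  using assms(1)
proof induction
  case fold_composition_id
  show ?case
    using fold_composition.fold_composition_fold[OF fold_composition.fold_composition_id \<sigma>] by simp
next
  case (fold_composition_fold \<psi> \<tau> c)
  from fold_composition.fold_composition_fold[OF fold_composition_fold.IH fold_composition_fold.hyps(2)]
  show ?case by (simp only: comp_assoc)
qed

lemma contraction_id: "contraction id"
  by (simp add: contraction_def)

lemma contraction_comp:
  assumes "contraction f" and "contraction g"
  shows "contraction (f \<circ> g)"
  unfolding contraction_def
proof (intro allI)
  fix s t
  have "\<bar>f (g s) - f (g t)\<bar> \<le> \<bar>g s - g t\<bar>" using assms(1) unfolding contraction_def by blast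
  also have "\<dots> \<le> \<bar>s - t\<bar>" using assms(2) unfolding contraction_def by blast
  finally show "\<bar>(f \<circ> g) s - (f \<circ> g) t\<bar> \<le> \<bar>s - t\<bar>" by simp
qed

lemma contraction_fold_map:
  assumes "\<sigma> \<in> {1, -1}"
  shows "contraction (fold_map d \<sigma>)"
  unfolding contraction_def
proof (intro allI)
  fix s t
  have "\<bar>fold_map d \<sigma> s - fold_map d \<sigma> t\<bar> = \<bar>\<bar>s - d\<bar> - \<bar>t - d\<bar>\<bar>"
    using assms by (auto simp: fold_map_def)
  also have "\<dots> \<le> \<bar>(s - d) - (t - d)\<bar>" by (rule abs_triangle_ineq3)
  finally show "\<bar>fold_map d \<sigma> s - fold_map d \<sigma> t\<bar> \<le> \<bar>s - t\<bar>" by simp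
qed

lemma contraction_fold_composition: "fold_composition \<psi> \<Longrightarrow> contraction \<psi>"
proof (induction rule: fold_composition.induct)
  case fold_composition_id
  show ?case by (rule contraction_id)
next
  case (fold_composition_fold \<psi> \<sigma> d)
  show ?case
    using contraction_comp[OF fold_composition_fold.IH contraction_fold_map[OF fold_composition_fold.hyps(2)]] .
qed

lemma contraction_uminus: "contraction \<psi> \<Longrightarrow> contraction (\<lambda>s. - \<psi> s)"
  unfolding contraction_def by (simp add: abs_minus_commute)

lemma contraction_imp_continuous_on: "contraction f \<Longrightarrow> continuous_on S f"
  by (rule lipschitz_on_continuous_on[of 1])
     (auto simp: lipschitz_on_def contraction_def dist_real_def)

lemma contraction_unit_slope_of_endpoints:
  assumes "contraction \<phi>" and "a \<le> s" "s \<le> b" and "b - a \<le> \<phi> b - \<phi> a"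
  shows "\<phi> s = \<phi> a + (s - a)"
proof -
  have "\<phi> s - \<phi> a \<le> \<bar>s - a\<bar>" "\<phi> b - \<phi> s \<le> \<bar>b - s\<bar>"
    using assms(1) unfolding contraction_def by (meson abs_le_D1)+
  then show ?thesis using assms(2-4) by linarith
qed

definition strictly_between_on :: "(real \<Rightarrow> real) \<Rightarrow> real \<Rightarrow> real \<Rightarrow> bool" where
  "strictly_between_on \<psi> a b \<longleftrightarrow>
     (\<forall>s\<in>{a<..<b}. min (\<psi> a) (\<psi> b) < \<psi> s \<and> \<psi> s < max (\<psi> a) (\<psi> b))"

text \<open>A stretch of \<open>\<psi>\<close> is an interval on whose interior \<open>\<psi>\<close> stays strictly between its
  endpoint values. Requiring slope \<open>\<plusminus>1\<close> on stretches is the defining property of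
  \<^const>\<open>class_I\<close>, here stated on closed intervals.\<close>
definition unit_slope_on_stretches :: "(real \<Rightarrow> real) \<Rightarrow> bool" where
  "unit_slope_on_stretches \<psi> \<longleftrightarrow> (\<forall>a b. a < b \<longrightarrow> strictly_between_on \<psi> a b \<longrightarrow>
     (\<exists>\<sigma>\<in>{1, -1}. \<forall>s\<in>{a..b}. \<psi> s = \<psi> a + \<sigma> * (s - a)))"

lemma strictly_between_on_endpoint_value:
  assumes ab: "a < b" and between: "strictly_between_on \<psi> a b"
    and x: "x \<in> {a, b}" and y: "y \<in> {a..b}" "y \<noteq> x"
  shows "\<psi> y \<noteq> \<psi> x"
proof (cases "y \<in> {a<..<b}")
  case True
  with between have "min (\<psi> a) (\<psi> b) < \<psi> y \<and> \<psi> y < max (\<psi> a) (\<psi> b)"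
    unfolding strictly_between_on_def by (rule bspec)
  moreover have "\<psi> x = \<psi> a \<or> \<psi> x = \<psi> b" using x by auto
  ultimately show ?thesis by (auto simp: min_def max_def split: if_splits)
next
  case False
  have "(a + b) / 2 \<in> {a<..<b}" using ab by simp
  with between have "min (\<psi> a) (\<psi> b) < \<psi> ((a + b) / 2) \<and> \<psi> ((a + b) / 2) < max (\<psi> a) (\<psi> b)"
    unfolding strictly_between_on_def by (rule bspec)
  then have "\<psi> a \<noteq> \<psi> b" by auto
  moreover from False x y have "x = a \<and> y = b \<or> x = b \<and> y = a" by auto
  ultimately show ?thesis by auto
qed

lemma strictly_between_on_uminus:
  "strictly_between_on (\<lambda>s. - \<psi> s) a b \<longleftrightarrow> strictly_between_on \<psi> a b"
  unfolding strictly_between_on_def minus_max_eq_min[symmetric] minus_min_eq_max[symmetric]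
  by (simp add: conj_commute)

lemma unit_slope_on_stretches_id: "unit_slope_on_stretches id"
  unfolding unit_slope_on_stretches_def by auto

lemma unit_slope_on_stretches_uminus:
  assumes "unit_slope_on_stretches \<psi>"
  shows "unit_slope_on_stretches (\<lambda>s. - \<psi> s)"
  unfolding unit_slope_on_stretches_def strictly_between_on_uminus
proof (intro allI impI)
  fix a b :: real
  assume "a < b" "strictly_between_on \<psi> a b"
  then obtain \<sigma> where \<sigma>: "\<sigma> \<in> {1, -1}" and affine: "\<forall>s\<in>{a..b}. \<psi> s = \<psi> a + \<sigma> * (s - a)"
    using assms unfolding unit_slope_on_stretches_def by blast
  show "\<exists>\<sigma>\<in>{1, -1}. \<forall>s\<in>{a..b}. - \<psi> s = - \<psi> a + \<sigma> * (s - a)"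
  proof (intro bexI[of _ "- \<sigma>"] ballI)
    fix s assume "s \<in> {a..b}"
    from bspec[OF affine this] show "- \<psi> s = - \<psi> a + - \<sigma> * (s - a)" by simp
  qed (use \<sigma> in auto)
qed

lemma unit_slope_on_stretches_comp_affine:
  assumes g: "unit_slope_on_stretches g" and ab: "a < b" and \<tau>: "\<tau> \<in> {1, -1}"
    and f: "\<forall>s\<in>{a..b}. f s = f a + \<tau> * (s - a)"
    and between: "strictly_between_on (g \<circ> f) a b"
  shows "\<exists>\<sigma>\<in>{1, -1}. \<forall>s\<in>{a..b}. g (f s) = g (f a) + \<sigma> * (s - a)"
proof -
  define p q where "p = min (f a) (f b)" and "q = max (f a) (f b)"
  have f_at: "f s = f a + \<tau> * (s - a)" if "s \<in> {a..b}" for s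
    using f that by blast
  have fb: "f b = f a + \<tau> * (b - a)" using f_at[of b] ab by simp
  have pq: "p < q" using \<tau> fb ab by (auto simp: p_def q_def)
  have f_range: "f s \<in> {p..q}" if "s \<in> {a..b}" for s
    using f_at[OF that] that \<tau> fb unfolding p_def q_def by (cases "\<tau> = 1") auto
  have "strictly_between_on g p q"
    unfolding strictly_between_on_def
  proof
    fix r assume r: "r \<in> {p<..<q}"
    define s where "s = a + \<tau> * (r - f a)"
    have s: "s \<in> {a<..<b}"
      using r \<tau> fb ab unfolding s_def p_def q_def by (cases "\<tau> = 1") (auto simp: min_def max_def)
    have "f s = f a + \<tau> * (s - a)" using s by (intro f_at) simp
    also have "\<dots> = r" using \<tau> by (auto simp: s_def)
    finally have "f s = r" .
    moreover have "min ((g \<circ> f) a) ((g \<circ> f) b) < (g \<circ> f) s \<and> (g \<circ> f) s < max ((g \<circ> f) a) ((g \<circ> f) b)"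
      using bspec[OF between[unfolded strictly_between_on_def] s] .
    ultimately show "min (g p) (g q) < g r \<and> g r < max (g p) (g q)"
      by (auto simp: p_def q_def min_def max_def split: if_splits)
  qed
  then obtain \<sigma> where \<sigma>: "\<sigma> \<in> {1, -1}" and g_affine: "\<forall>r\<in>{p..q}. g r = g p + \<sigma> * (r - p)"
    using g pq unfolding unit_slope_on_stretches_def by blast
  show ?thesis
  proof (intro bexI[of _ "\<sigma> * \<tau>"] ballI)
    fix s assume s: "s \<in> {a..b}"
    have "g (f s) - g (f a) = \<sigma> * (f s - f a)"
      using bspec[OF g_affine f_range[OF s]] bspec[OF g_affine f_range[of a]] ab
      by (simp add: algebra_simps)
    also have "\<dots> = \<sigma> * \<tau> * (s - a)" using f_at[OF s] by simp
    finally show "g (f s) = g (f a) + \<sigma> * \<tau> * (s - a)" by simp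
  qed (use \<sigma> \<tau> in auto)
qed

lemma unit_slope_on_stretches_comp_fold_map:
  assumes g: "unit_slope_on_stretches g" and \<sigma>: "\<sigma> \<in> {1, -1}"
  shows "unit_slope_on_stretches (g \<circ> fold_map d \<sigma>)"
  unfolding unit_slope_on_stretches_def
proof (intro allI impI)
  fix a b :: real
  assume ab: "a < b" and between: "strictly_between_on (g \<circ> fold_map d \<sigma>) a b"
  have "d \<notin> {a<..<b}"
  proof
    assume d: "d \<in> {a<..<b}"
    have mirror: "(g \<circ> fold_map d \<sigma>) (2 * d - x) = (g \<circ> fold_map d \<sigma>) x" for x
      by (simp add: fold_map_def abs_minus_commute)
    show False
    proof (cases "d - a \<le> b - d")
      case True
      then have "2 * d - a \<in> {a..b}" "2 * d - a \<noteq> a" using d by auto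
      from strictly_between_on_endpoint_value[OF ab between _ this] mirror[of a]
      show False by simp
    next
      case False
      then have "2 * d - b \<in> {a..b}" "2 * d - b \<noteq> b" using d by auto
      from strictly_between_on_endpoint_value[OF ab between _ this] mirror[of b]
      show False by simp
    qed
  qed
  have affine:
    "\<forall>s\<in>{a..b}. fold_map d \<sigma> s = fold_map d \<sigma> a + (if d \<le> a then \<sigma> else - \<sigma>) * (s - a)"
  proof
    fix s assume s: "s \<in> {a..b}"
    consider "d \<le> a" | "b \<le> d" using \<open>d \<notin> {a<..<b}\<close> by fastforce
    then show "fold_map d \<sigma> s = fold_map d \<sigma> a + (if d \<le> a then \<sigma> else - \<sigma>) * (s - a)"
    proof cases
      case 1
      with s show ?thesis by (simp add: fold_map_def abs_of_nonneg algebra_simps)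
    next
      case 2
      with s ab show ?thesis by (simp add: fold_map_def abs_of_nonpos algebra_simps)
    qed
  qed
  have "(if d \<le> a then \<sigma> else - \<sigma>) \<in> {1, -1}" using \<sigma> by auto
  from unit_slope_on_stretches_comp_affine[OF g ab this affine between]
  show "\<exists>\<sigma>'\<in>{1, -1}. \<forall>s\<in>{a..b}. (g \<circ> fold_map d \<sigma>) s = (g \<circ> fold_map d \<sigma>) a + \<sigma>' * (s - a)"
    unfolding comp_apply .
qed

lemma unit_slope_on_stretches_fold_composition:
  "fold_composition \<psi> \<Longrightarrow> unit_slope_on_stretches \<psi>"
proof (induction rule: fold_composition.induct)
  case fold_composition_id
  show ?case by (rule unit_slope_on_stretches_id)
next
  case (fold_composition_fold \<psi> \<sigma> d)
  show ?case
    using unit_slope_on_stretches_comp_fold_map[OF fold_composition_fold.IH fold_composition_fold.hyps(2)] .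
qed

section \<open>Contractions far from unit slope on stretches\<close>

lemma continuous_on_Icc_pos_lower_bound:
  fixes f :: "real \<Rightarrow> real"
  assumes "continuous_on {c..d} f" "c \<le> d" "\<forall>s\<in>{c..d}. 0 < f s"
  shows "\<exists>\<gamma>>0. \<forall>s\<in>{c..d}. \<gamma> \<le> f s"
proof -
  obtain s0 where "s0 \<in> {c..d}" "\<forall>s\<in>{c..d}. f s0 \<le> f s"
    using continuous_attains_inf[OF compact_Icc _ assms(1)] assms(2) by auto
  then show ?thesis using assms(3) by blast
qed

lemma compact_Icc_Int_vimage:
  fixes \<psi> :: "real \<Rightarrow> real"
  assumes "continuous_on {c..d} \<psi>" and "closed T"
  shows "compact ({c..d} \<inter> \<psi> -` T)"
  unfolding compact_eq_bounded_closed
proof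
  show "bounded ({c..d} \<inter> \<psi> -` T)" by (simp add: bounded_Int)
  show "closed ({c..d} \<inter> \<psi> -` T)" using assms by (intro continuous_closed_preimage) auto
qed

lemma strict_stretch_exists:
  fixes \<psi> :: "real \<Rightarrow> real"
  assumes \<psi>: "continuous_on {a..b} \<psi>" and "a \<le> a'" "a' \<le> b'" "b' \<le> b"
    and above: "\<forall>s\<in>{a'..b}. \<psi> a < \<psi> s" and below: "\<forall>s\<in>{a..b'}. \<psi> s < \<psi> b"
  shows "\<exists>\<alpha>\<in>{a..a'}. \<exists>\<beta>\<in>{b'..b}. \<psi> \<alpha> \<le> \<psi> a \<and> \<psi> b \<le> \<psi> \<beta> \<and>
           (\<forall>s\<in>{\<alpha><..<\<beta>}. \<psi> a < \<psi> s \<and> \<psi> s < \<psi> b)"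
proof -
  define T1 where "T1 = {a..a'} \<inter> \<psi> -` {..\<psi> a}"
  define T2 where "T2 = {b'..b} \<inter> \<psi> -` {\<psi> b..}"
  have "continuous_on {a..a'} \<psi>" "continuous_on {b'..b} \<psi>"
    using assms(2-4) by (auto intro: continuous_on_subset[OF \<psi>])
  then have "compact T1" "compact T2"
    unfolding T1_def T2_def by (auto intro: compact_Icc_Int_vimage)
  moreover have "a \<in> T1" "b \<in> T2" using assms(2-4) by (auto simp: T1_def T2_def)
  ultimately obtain \<alpha> \<beta> where \<alpha>: "\<alpha> \<in> T1" "\<forall>s\<in>T1. s \<le> \<alpha>" and \<beta>: "\<beta> \<in> T2" "\<forall>s\<in>T2. \<beta> \<le> s"
    using compact_attains_sup[of T1] compact_attains_inf[of T2] by blast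
  have "\<forall>s\<in>{\<alpha><..<\<beta>}. \<psi> a < \<psi> s \<and> \<psi> s < \<psi> b"
  proof (intro ballI conjI)
    fix s assume "s \<in> {\<alpha><..<\<beta>}"
    then have s: "\<alpha> < s" "s < \<beta>" by auto
    show "\<psi> a < \<psi> s"
    proof (cases "s \<le> a'")
      case True
      have "s \<notin> T1" using \<alpha>(2) s(1) by auto
      with True \<alpha>(1) s(1) show ?thesis by (auto simp: T1_def)
    next
      case False
      with \<beta>(1) s(2) have "s \<in> {a'..b}" by (auto simp: T2_def)
      with above show ?thesis by (rule bspec)
    qed
  next
    fix s assume "s \<in> {\<alpha><..<\<beta>}"
    then have s: "\<alpha> < s" "s < \<beta>" by auto
    show "\<psi> s < \<psi> b"
    proof (cases "b' \<le> s")
      case True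
      have "s \<notin> T2" using \<beta>(2) s(2) by auto
      with True \<beta>(1) s(2) show ?thesis by (auto simp: T2_def)
    next
      case False
      with \<alpha>(1) s(1) have "s \<in> {a..b'}" by (auto simp: T1_def)
      with below show ?thesis by (rule bspec)
    qed
  qed
  moreover have "\<alpha> \<in> {a..a'}" "\<psi> \<alpha> \<le> \<psi> a" "\<beta> \<in> {b'..b}" "\<psi> b \<le> \<psi> \<beta>"
    using \<alpha>(1) \<beta>(1) by (auto simp: T1_def T2_def)
  ultimately show ?thesis by blast
qed

lemma unit_slope_on_stretches_increment:
  fixes \<psi> :: "real \<Rightarrow> real"
  assumes \<psi>: "unit_slope_on_stretches \<psi>" "continuous_on {a..b} \<psi>"
    and "a \<le> a'" "a' < b'" "b' \<le> b"
    and above: "\<forall>s\<in>{a'..b}. \<psi> a < \<psi> s" and below: "\<forall>s\<in>{a..b'}. \<psi> s < \<psi> b"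
  shows "\<psi> b' - \<psi> a' = b' - a'"
proof -
  obtain \<alpha> \<beta> where \<alpha>: "\<alpha> \<in> {a..a'}" "\<psi> \<alpha> \<le> \<psi> a" and \<beta>: "\<beta> \<in> {b'..b}" "\<psi> b \<le> \<psi> \<beta>"
    and inside: "\<forall>s\<in>{\<alpha><..<\<beta>}. \<psi> a < \<psi> s \<and> \<psi> s < \<psi> b"
    using strict_stretch_exists[OF \<psi>(2) assms(3) _ assms(5) above below] assms(4) by auto
  have "b \<in> {a'..b}" using assms(4,5) by simp
  with above have "\<psi> a < \<psi> b" by (rule bspec)
  have "strictly_between_on \<psi> \<alpha> \<beta>"
    unfolding strictly_between_on_def
  proof
    fix s assume "s \<in> {\<alpha><..<\<beta>}"
    with inside have "\<psi> a < \<psi> s \<and> \<psi> s < \<psi> b" by (rule bspec)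
    moreover have "min (\<psi> \<alpha>) (\<psi> \<beta>) = \<psi> \<alpha>" "max (\<psi> \<alpha>) (\<psi> \<beta>) = \<psi> \<beta>"
      using \<alpha>(2) \<beta>(2) \<open>\<psi> a < \<psi> b\<close> by auto
    ultimately show "min (\<psi> \<alpha>) (\<psi> \<beta>) < \<psi> s \<and> \<psi> s < max (\<psi> \<alpha>) (\<psi> \<beta>)"
      using \<alpha>(2) \<beta>(2) by linarith
  qed
  moreover have "\<alpha> < \<beta>" using \<alpha> \<beta> assms(4) by auto
  ultimately obtain \<sigma> where \<sigma>: "\<sigma> \<in> {1, -1}" and affine: "\<forall>s\<in>{\<alpha>..\<beta>}. \<psi> s = \<psi> \<alpha> + \<sigma> * (s - \<alpha>)"
    using \<psi>(1) unfolding unit_slope_on_stretches_def by blast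
  have "\<beta> \<in> {\<alpha>..\<beta>}" "a' \<in> {\<alpha>..\<beta>}" "b' \<in> {\<alpha>..\<beta>}" using \<alpha> \<beta> assms(4) by auto
  note at = bspec[OF affine this(1)] bspec[OF affine this(2)] bspec[OF affine this(3)]
  have "\<sigma> = 1" using \<sigma> at(1) \<open>\<alpha> < \<beta>\<close> \<open>\<psi> a < \<psi> b\<close> \<alpha>(2) \<beta>(2) by auto
  with at(2,3) show ?thesis by simp
qed

definition uniformly_far_from_unit_slope_stretches :: "(real \<Rightarrow> real) \<Rightarrow> real \<Rightarrow> real \<Rightarrow> bool" where
  "uniformly_far_from_unit_slope_stretches \<phi> a b \<longleftrightarrow> (\<exists>\<epsilon>>0. \<forall>\<psi>.
     contraction \<psi> \<longrightarrow> unit_slope_on_stretches \<psi> \<longrightarrow> (\<exists>s\<in>{a..b}. \<epsilon> < \<bar>\<psi> s - \<phi> s\<bar>))"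

lemma uniformly_far_from_unit_slope_stretches_uminus:
  assumes "uniformly_far_from_unit_slope_stretches (\<lambda>s. - \<phi> s) a b"
  shows "uniformly_far_from_unit_slope_stretches \<phi> a b"
  unfolding uniformly_far_from_unit_slope_stretches_def
proof -
  obtain \<epsilon> where "\<epsilon> > 0" and far: "\<forall>\<psi>. contraction \<psi> \<longrightarrow> unit_slope_on_stretches \<psi> \<longrightarrow>
      (\<exists>s\<in>{a..b}. \<epsilon> < \<bar>\<psi> s - - \<phi> s\<bar>)"
    using assms unfolding uniformly_far_from_unit_slope_stretches_def by blast
  have "\<exists>s\<in>{a..b}. \<epsilon> < \<bar>\<psi> s - \<phi> s\<bar>" if \<psi>: "contraction \<psi>" "unit_slope_on_stretches \<psi>" for \<psi>
  proof -
    obtain s where "s \<in> {a..b}" "\<epsilon> < \<bar>- \<psi> s - - \<phi> s\<bar>"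
      using far contraction_uminus[OF \<psi>(1)] unit_slope_on_stretches_uminus[OF \<psi>(2)] by blast
    then show ?thesis by (auto simp: abs_minus_commute)
  qed
  with \<open>\<epsilon> > 0\<close> show "\<exists>\<epsilon>>0. \<forall>\<psi>. contraction \<psi> \<longrightarrow> unit_slope_on_stretches \<psi> \<longrightarrow>
      (\<exists>s\<in>{a..b}. \<epsilon> < \<bar>\<psi> s - \<phi> s\<bar>)" by blast
qed

lemma strictly_between_margin:
  fixes \<phi> :: "real \<Rightarrow> real"
  assumes \<phi>: "continuous_on {a..b} \<phi>" and "a < a'" "a' < b'" "b' < b"
    and inside: "\<forall>s\<in>{a<..<b}. \<phi> a < \<phi> s \<and> \<phi> s < \<phi> b"
  shows "\<exists>\<gamma>>0. (\<forall>s\<in>{a'..b}. \<phi> a + \<gamma> \<le> \<phi> s) \<and> (\<forall>s\<in>{a..b'}. \<phi> s + \<gamma> \<le> \<phi> b)"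
proof -
  have "(a + b) / 2 \<in> {a<..<b}" using assms(2-4) by simp
  with inside have "\<phi> a < \<phi> ((a + b) / 2) \<and> \<phi> ((a + b) / 2) < \<phi> b" by (rule bspec)
  then have ab: "\<phi> a < \<phi> b" by linarith
  have "{a'..b} \<subseteq> {a..b}" "{a..b'} \<subseteq> {a..b}" using assms(2-4) by auto
  then have cont: "continuous_on {a'..b} (\<lambda>s. \<phi> s - \<phi> a)" "continuous_on {a..b'} (\<lambda>s. \<phi> b - \<phi> s)"
    using continuous_on_subset[OF \<phi>] by (auto intro: continuous_intros)
  have "\<forall>s\<in>{a'..b}. 0 < \<phi> s - \<phi> a"
  proof
    fix s assume "s \<in> {a'..b}"
    with assms(2) have "s \<in> {a<..<b} \<or> s = b" by auto
    with inside ab show "0 < \<phi> s - \<phi> a" by auto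
  qed
  then have "\<exists>\<gamma>>0. \<forall>s\<in>{a'..b}. \<gamma> \<le> \<phi> s - \<phi> a"
    using assms(3,4) by (intro continuous_on_Icc_pos_lower_bound[OF cont(1)]) simp_all
  then obtain \<gamma>1 where \<gamma>1: "\<gamma>1 > 0" "\<forall>s\<in>{a'..b}. \<gamma>1 \<le> \<phi> s - \<phi> a" by blast
  have "\<forall>s\<in>{a..b'}. 0 < \<phi> b - \<phi> s"
  proof
    fix s assume "s \<in> {a..b'}"
    with assms(4) have "s \<in> {a<..<b} \<or> s = a" by auto
    with inside ab show "0 < \<phi> b - \<phi> s" by auto
  qed
  then have "\<exists>\<gamma>>0. \<forall>s\<in>{a..b'}. \<gamma> \<le> \<phi> b - \<phi> s"
    using assms(2,3) by (intro continuous_on_Icc_pos_lower_bound[OF cont(2)]) simp_all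
  then obtain \<gamma>2 where \<gamma>2: "\<gamma>2 > 0" "\<forall>s\<in>{a..b'}. \<gamma>2 \<le> \<phi> b - \<phi> s" by blast
  show ?thesis
  proof (intro exI[of _ "min \<gamma>1 \<gamma>2"] conjI ballI)
    show "0 < min \<gamma>1 \<gamma>2" using \<gamma>1(1) \<gamma>2(1) by simp
  next
    fix s assume "s \<in> {a'..b}"
    from bspec[OF \<gamma>1(2) this] show "\<phi> a + min \<gamma>1 \<gamma>2 \<le> \<phi> s" using min.cobounded1[of \<gamma>1 \<gamma>2] by linarith
  next
    fix s assume "s \<in> {a..b'}"
    from bspec[OF \<gamma>2(2) this] show "\<phi> s + min \<gamma>1 \<gamma>2 \<le> \<phi> b" using min.cobounded2[of \<gamma>1 \<gamma>2] by linarith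
  qed
qed

text \<open>A function that is \<open>\<epsilon>\<close>-close to \<open>\<phi>\<close> exceeds \<open>\<psi> a\<close> on \<open>[a', b]\<close> and stays below
  \<open>\<psi> b\<close> on \<open>[a, b']\<close>, so it has a stretch containing \<open>[a', b']\<close>.\<close>
lemma unit_slope_on_stretches_increment_near:
  fixes \<phi> \<psi> :: "real \<Rightarrow> real"
  assumes \<psi>: "unit_slope_on_stretches \<psi>" "continuous_on {a..b} \<psi>"
    and "a \<le> a'" "a' < b'" "b' \<le> b"
    and near: "\<forall>s\<in>{a..b}. \<bar>\<psi> s - \<phi> s\<bar> \<le> \<epsilon>" and \<gamma>: "3 * \<epsilon> \<le> \<gamma>" "0 < \<epsilon>"
    and margin: "\<forall>s\<in>{a'..b}. \<phi> a + \<gamma> \<le> \<phi> s" "\<forall>s\<in>{a..b'}. \<phi> s + \<gamma> \<le> \<phi> b"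
  shows "\<psi> b' - \<psi> a' = b' - a'"
proof (rule unit_slope_on_stretches_increment[OF \<psi> assms(3-5)])
  have close: "\<psi> s - \<epsilon> \<le> \<phi> s \<and> \<phi> s \<le> \<psi> s + \<epsilon>" if "s \<in> {a..b}" for s
    using bspec[OF near that] by (simp add: abs_le_iff)
  show "\<forall>s\<in>{a'..b}. \<psi> a < \<psi> s"
  proof
    fix s assume s: "s \<in> {a'..b}"
    have mem: "s \<in> {a..b}" "a \<in> {a..b}" using s assms(3-5) by auto
    show "\<psi> a < \<psi> s" using close[OF mem(1)] close[OF mem(2)] bspec[OF margin(1) s] \<gamma> by linarith
  qed
  show "\<forall>s\<in>{a..b'}. \<psi> s < \<psi> b"
  proof
    fix s assume s: "s \<in> {a..b'}"
    have mem: "s \<in> {a..b}" "b \<in> {a..b}" using s assms(3-5) by auto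
    show "\<psi> s < \<psi> b" using close[OF mem(1)] close[OF mem(2)] bspec[OF margin(2) s] \<gamma> by linarith
  qed
qed

text \<open>On \<open>[a + \<kappa>, b - \<kappa>]\<close> the average slope of \<open>\<phi>\<close> is still \<open>< 1\<close>, whereas every function with
  unit slope on stretches that is close to \<open>\<phi>\<close> has slope \<open>1\<close> there.\<close>
lemma uniformly_far_from_unit_slope_stretches_increasing:
  fixes \<phi> :: "real \<Rightarrow> real"
  assumes \<phi>: "contraction \<phi>" and ab: "a < b"
    and inside: "\<forall>s\<in>{a<..<b}. \<phi> a < \<phi> s \<and> \<phi> s < \<phi> b"
    and slow: "\<phi> b - \<phi> a < b - a"
  shows "uniformly_far_from_unit_slope_stretches \<phi> a b"
proof -
  define \<delta> where "\<delta> = (b - a) - (\<phi> b - \<phi> a)"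
  define \<kappa> where "\<kappa> = min (\<delta> / 8) ((b - a) / 4)"
  define a' b' where "a' = a + \<kappa>" and "b' = b - \<kappa>"
  have \<delta>: "\<delta> > 0" using slow by (simp add: \<delta>_def)
  have \<kappa>: "0 < \<kappa>" "\<kappa> \<le> \<delta> / 8" "\<kappa> \<le> (b - a) / 4"
    using \<delta> ab unfolding \<kappa>_def by (simp_all only: min.cobounded1 min.cobounded2) simp
  have a'b': "a < a'" "a' < b'" "b' < b" using \<kappa> ab by (auto simp: a'_def b'_def)
  obtain \<gamma> where \<gamma>: "\<gamma> > 0" and margin: "\<forall>s\<in>{a'..b}. \<phi> a + \<gamma> \<le> \<phi> s" "\<forall>s\<in>{a..b'}. \<phi> s + \<gamma> \<le> \<phi> b"
    using strictly_between_margin[OF contraction_imp_continuous_on[OF \<phi>] a'b' inside] by blast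
  have slow': "\<phi> b' - \<phi> a' \<le> b' - a' - \<delta> / 2"
  proof -
    have "\<bar>\<phi> b - \<phi> b'\<bar> \<le> \<bar>b - b'\<bar>" "\<bar>\<phi> a' - \<phi> a\<bar> \<le> \<bar>a' - a\<bar>"
      using \<phi> unfolding contraction_def by blast+
    then have "\<phi> b' - \<phi> b \<le> \<kappa>" "\<phi> a - \<phi> a' \<le> \<kappa>"
      using \<kappa>(1) unfolding a'_def b'_def by (simp_all add: abs_le_iff)
    moreover have "b' - a' = (b - a) - 2 * \<kappa>" by (simp add: a'_def b'_def)
    ultimately show ?thesis using \<kappa>(2) \<delta>_def by linarith
  qed
  define \<epsilon> where "\<epsilon> = min (\<delta> / 8) (\<gamma> / 3)"
  have \<epsilon>: "0 < \<epsilon>" "\<epsilon> \<le> \<delta> / 8" "3 * \<epsilon> \<le> \<gamma>" using \<delta> \<gamma> by (auto simp: \<epsilon>_def)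
  have "\<exists>s\<in>{a..b}. \<epsilon> < \<bar>\<psi> s - \<phi> s\<bar>" if \<psi>: "contraction \<psi>" "unit_slope_on_stretches \<psi>" for \<psi>
  proof (rule ccontr)
    assume "\<not> ?thesis"
    then have near: "\<forall>s\<in>{a..b}. \<bar>\<psi> s - \<phi> s\<bar> \<le> \<epsilon>" by (auto simp: not_less)
    have "\<psi> b' - \<psi> a' = b' - a'"
      using a'b' by (intro unit_slope_on_stretches_increment_near[OF \<psi>(2)
          contraction_imp_continuous_on[OF \<psi>(1)] _ _ _ near \<epsilon>(3,1) margin]) simp_all
    moreover have "a' \<in> {a..b}" "b' \<in> {a..b}" using a'b' by auto
    ultimately show False
      using bspec[OF near, of a'] bspec[OF near, of b'] slow' \<epsilon>(2) \<delta> by (simp add: abs_le_iff)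
  qed
  with \<epsilon>(1) show ?thesis unfolding uniformly_far_from_unit_slope_stretches_def by blast
qed

lemma uniformly_far_from_unit_slope_stretches_if_not_affine:
  fixes \<phi> :: "real \<Rightarrow> real"
  assumes \<phi>: "contraction \<phi>" and ab: "a < b" and between: "strictly_between_on \<phi> a b"
    and not_affine: "\<not> (\<exists>\<sigma> c. (\<sigma> = 1 \<or> \<sigma> = -1) \<and> (\<forall>s\<in>{a<..<b}. \<phi> s = \<sigma> * s + c))"
  shows "uniformly_far_from_unit_slope_stretches \<phi> a b"
proof -
  have "\<phi> b \<noteq> \<phi> a" using strictly_between_on_endpoint_value[OF ab between, of a b] ab by auto
  then consider "\<phi> a < \<phi> b" | "\<phi> b < \<phi> a" by linarith
  then show ?thesis
  proof cases
    case 1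
    have inside: "\<forall>s\<in>{a<..<b}. \<phi> a < \<phi> s \<and> \<phi> s < \<phi> b"
      using between 1 by (simp add: strictly_between_on_def min_def max_def)
    have "\<phi> b - \<phi> a < b - a"
    proof (rule ccontr)
      assume "\<not> ?thesis"
      then have "\<phi> s = 1 * s + (\<phi> a - a)" if "s \<in> {a<..<b}" for s
        using contraction_unit_slope_of_endpoints[OF \<phi>, of a s b] that by auto
      with not_affine show False by blast
    qed
    with inside show ?thesis by (rule uniformly_far_from_unit_slope_stretches_increasing[OF \<phi> ab])
  next
    case 2
    have inside: "\<forall>s\<in>{a<..<b}. - \<phi> a < - \<phi> s \<and> - \<phi> s < - \<phi> b"
      using between 2 by (simp add: strictly_between_on_def min_def max_def)
    have "- \<phi> b - - \<phi> a < b - a"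
    proof (rule ccontr)
      assume "\<not> ?thesis"
      then have "\<phi> s = -1 * s + (\<phi> a + a)" if "s \<in> {a<..<b}" for s
        using contraction_unit_slope_of_endpoints[OF contraction_uminus[OF \<phi>], of a s b] that by auto
      with not_affine show False by blast
    qed
    with inside have "uniformly_far_from_unit_slope_stretches (\<lambda>s. - \<phi> s) a b"
      by (rule uniformly_far_from_unit_slope_stretches_increasing[OF contraction_uminus[OF \<phi>] ab])
    then show ?thesis by (rule uniformly_far_from_unit_slope_stretches_uminus)
  qed
qed

lemma uniformly_far_from_unit_slope_stretches_if_not_class_I:
  assumes "contraction \<phi>" and "\<phi> \<notin> class_I"
  obtains a b where "uniformly_far_from_unit_slope_stretches \<phi> a b"
proof -
  from assms obtain a b where "a < b" "strictly_between_on \<phi> a b"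
    "\<not> (\<exists>\<sigma> c. (\<sigma> = 1 \<or> \<sigma> = -1) \<and> (\<forall>s\<in>{a<..<b}. \<phi> s = \<sigma> * s + c))"
    unfolding class_I_def strictly_between_on_def by blast
  with assms(1) show thesis
    using that uniformly_far_from_unit_slope_stretches_if_not_affine by blast
qed

section \<open>Polarizations of tubes around graphs\<close>

text \<open>With \<open>e \<bottom> u\<close> as first and \<open>u\<close> as second coordinate: the vertical \<open>h\<close>-neighbourhood of
  the graph of \<open>g\<close>, cut off at distance \<open>R\<close> from the \<open>u\<close>-axis.\<close>
definition graph_tube :: "'a::euclidean_space \<Rightarrow> 'a \<Rightarrow> real \<Rightarrow> real \<Rightarrow> (real \<Rightarrow> real) \<Rightarrow> 'a set" where
  "graph_tube u e R h g = {y. norm (y - (u \<bullet> y) *\<^sub>R u) \<le> R \<and> \<bar>u \<bullet> y - g (e \<bullet> y)\<bar> \<le> h}"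

lemma refl_hp_parallel:
  assumes "\<sigma> \<in> {1, -1}"
  shows "refl_hp (\<sigma> *\<^sub>R u) c y = y + (2 * \<sigma> * c - 2 * (u \<bullet> y)) *\<^sub>R u"
  using assms by (auto simp: refl_hp_def algebra_simps)

text \<open>\<open>t\<close> and \<open>2 \<sigma> c - t\<close> are the \<open>u\<close>-coordinates of a point and of its mirror image,
  \<open>m\<close> is the height of the graph.\<close>
lemma abs_sub_fold_map_le:
  assumes "\<sigma> \<in> {1, -1}"
    and "(c \<le> \<sigma> * t \<and> (\<bar>t - m\<bar> \<le> h \<or> \<bar>2 * \<sigma> * c - t - m\<bar> \<le> h)) \<or>
         (\<sigma> * t < c \<and> \<bar>t - m\<bar> \<le> h \<and> \<bar>2 * \<sigma> * c - t - m\<bar> \<le> h)"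
  shows "\<bar>t - fold_map (\<sigma> * c) \<sigma> m\<bar> \<le> h"
proof -
  from assms(1) have "\<sigma> = 1 \<or> \<sigma> = -1" by simp
  with assms(2) show ?thesis unfolding fold_map_def by (elim disjE conjE) (simp; linarith)+
qed

lemma polarization_graph_tube:
  fixes u e :: "'a::euclidean_space"
  assumes u: "norm u = 1" and eu: "e \<bullet> u = 0" and \<sigma>: "\<sigma> \<in> {1, -1}"
  shows "polarization (\<sigma> *\<^sub>R u) c (graph_tube u e R h g) \<subseteq> graph_tube u e R h (fold_map (\<sigma> * c) \<sigma> \<circ> g)"
proof
  fix y assume y: "y \<in> polarization (\<sigma> *\<^sub>R u) c (graph_tube u e R h g)"
  define r where "r = refl_hp (\<sigma> *\<^sub>R u) c y"
  have r: "r = y + (2 * \<sigma> * c - 2 * (u \<bullet> y)) *\<^sub>R u" unfolding r_def by (rule refl_hp_parallel[OF \<sigma>])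
  have uu: "u \<bullet> u = 1" using u by (simp add: norm_eq_1)
  then have ur: "u \<bullet> r = 2 * \<sigma> * c - u \<bullet> y" by (simp add: r inner_add_right algebra_simps)
  have er: "e \<bullet> r = e \<bullet> y" using eu by (simp add: r inner_add_right)
  have pr: "r - (u \<bullet> r) *\<^sub>R u = y - (u \<bullet> y) *\<^sub>R u" by (simp add: ur r uu algebra_simps) (simp add: scaleR_left_distrib[symmetric] mult_2_right)
  have r_mem: "r \<in> graph_tube u e R h g \<longleftrightarrow>
      norm (y - (u \<bullet> y) *\<^sub>R u) \<le> R \<and> \<bar>2 * \<sigma> * c - u \<bullet> y - g (e \<bullet> y)\<bar> \<le> h"
    unfolding graph_tube_def mem_Collect_eq pr by (simp add: ur er)
  have "(c \<le> \<sigma> * (u \<bullet> y) \<and> (y \<in> graph_tube u e R h g \<or> r \<in> graph_tube u e R h g)) \<or>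
        (\<sigma> * (u \<bullet> y) < c \<and> y \<in> graph_tube u e R h g \<and> r \<in> graph_tube u e R h g)"
    using y by (simp add: polarization_def r_def)
  then have "norm (y - (u \<bullet> y) *\<^sub>R u) \<le> R"
    and "\<bar>u \<bullet> y - fold_map (\<sigma> * c) \<sigma> (g (e \<bullet> y))\<bar> \<le> h"
    unfolding r_mem by (auto simp: graph_tube_def intro!: abs_sub_fold_map_le[OF \<sigma>])
  then show "y \<in> graph_tube u e R h (fold_map (\<sigma> * c) \<sigma> \<circ> g)" by (simp add: graph_tube_def)
qed

lemma polarization_mono: "A \<subseteq> B \<Longrightarrow> polarization v c A \<subseteq> polarization v c B"
  unfolding polarization_def by auto

lemma polarization_composition_graph_tube:
  fixes u e :: "'a::euclidean_space"
  assumes u: "norm u = 1" and eu: "e \<bullet> u = 0" and "set ps \<subseteq> parallel_polarizations u"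
  shows "\<exists>\<psi>. fold_composition \<psi> \<and> foldr (\<circ>) ps id (graph_tube u e R h g) \<subseteq> graph_tube u e R h (\<psi> \<circ> g)"
  using assms(3)
proof (induction ps)
  case Nil
  show ?case using fold_composition_id by auto
next
  case (Cons P ps)
  then have "set ps \<subseteq> parallel_polarizations u" by simp
  then obtain \<psi> where \<psi>: "fold_composition \<psi>"
    and sub: "foldr (\<circ>) ps id (graph_tube u e R h g) \<subseteq> graph_tube u e R h (\<psi> \<circ> g)"
    using Cons.IH by blast
  from Cons.prems obtain v c where P: "P = polarization v c" and v: "v = u \<or> v = - u"
    unfolding parallel_polarizations_def by auto
  define \<sigma> :: real where "\<sigma> = (if v = u then 1 else -1)"
  have \<sigma>: "\<sigma> \<in> {1, -1}" and v\<sigma>: "v = \<sigma> *\<^sub>R u" using v by (auto simp: \<sigma>_def)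
  have "foldr (\<circ>) (P # ps) id (graph_tube u e R h g) = P (foldr (\<circ>) ps id (graph_tube u e R h g))"
    by simp
  also have "\<dots> \<subseteq> P (graph_tube u e R h (\<psi> \<circ> g))" unfolding P by (rule polarization_mono[OF sub])
  also have "\<dots> \<subseteq> graph_tube u e R h ((fold_map (\<sigma> * c) \<sigma> \<circ> \<psi>) \<circ> g)"
    unfolding P v\<sigma> comp_assoc by (rule polarization_graph_tube[OF u eu \<sigma>])
  finally show ?case using fold_composition_fold_left[OF \<psi> \<sigma>] by blast
qed

lemma abs_inner_unit_le: "norm u = 1 \<Longrightarrow> \<bar>u \<bullet> y\<bar> \<le> norm y"
  using Cauchy_Schwarz_ineq2[of u y] by simp

lemma graph_tube_id_convex_body:
  fixes u e :: "'a::euclidean_space"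
  assumes u: "norm u = 1" and e: "norm e = 1" and eu: "e \<bullet> u = 0" and "0 < R" "0 < h"
  shows "graph_tube u e R h id \<in> convex_bodies"
proof -
  let ?P = "\<lambda>y. y - (u \<bullet> y) *\<^sub>R u"
  have "linear ?P" by (auto intro!: linearI simp: inner_add_right algebra_simps)
  moreover have "graph_tube u e R h id = ?P -` cball 0 R \<inter> {y. \<bar>(u - e) \<bullet> y\<bar> \<le> h}"
    by (auto simp: graph_tube_def inner_diff_left)
  ultimately have "convex (graph_tube u e R h id)"
    by (metis convex_Int convex_cball convex_halfspace_abs_le convex_linear_vimage)
  have "closed (graph_tube u e R h id)"
    unfolding graph_tube_def id_def by (intro closed_Collect_conj closed_Collect_le continuous_intros)
  moreover have "bounded (graph_tube u e R h id)"
    unfolding bounded_iff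
  proof (intro exI ballI)
    fix y assume "y \<in> graph_tube u e R h id"
    then have P: "norm (?P y) \<le> R" and diag: "\<bar>u \<bullet> y - e \<bullet> y\<bar> \<le> h" by (auto simp: graph_tube_def)
    have "e \<bullet> y = e \<bullet> ?P y" using eu by (simp add: inner_diff_right)
    then have "\<bar>e \<bullet> y\<bar> \<le> R" using abs_inner_unit_le[OF e, of "?P y"] P by simp
    moreover have "norm y \<le> norm (?P y) + \<bar>u \<bullet> y\<bar>"
      using norm_triangle_ineq[of "?P y" "(u \<bullet> y) *\<^sub>R u"] u by simp
    ultimately show "norm y \<le> R + (R + h)" using P diag by linarith
  qed
  ultimately have "compact (graph_tube u e R h id)" by (simp add: compact_eq_bounded_closed)
  moreover have "0 \<in> interior (graph_tube u e R h id)"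
  proof (rule interiorI)
    show "open {y. norm (?P y) < R \<and> \<bar>u \<bullet> y - e \<bullet> y\<bar> < h}"
      by (intro open_Collect_conj open_Collect_less continuous_intros)
  qed (use assms in \<open>auto simp: graph_tube_def\<close>)
  ultimately show ?thesis using \<open>convex (graph_tube u e R h id)\<close> by (auto simp: convex_bodies_def)
qed

lemma cball_graph_coordinates:
  fixes u e :: "'a::euclidean_space"
  assumes u: "norm u = 1" and e: "norm e = 1" and eu: "e \<bullet> u = 0"
    and y: "y \<in> cball (s *\<^sub>R e + t *\<^sub>R u) \<rho>"
  shows "\<bar>u \<bullet> y - t\<bar> \<le> \<rho>" "\<bar>e \<bullet> y - s\<bar> \<le> \<rho>" "norm (y - (u \<bullet> y) *\<^sub>R u) \<le> \<bar>s\<bar> + 2 * \<rho>"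
proof -
  define z where "z = y - (s *\<^sub>R e + t *\<^sub>R u)"
  have z: "norm z \<le> \<rho>" using y by (simp add: z_def dist_norm norm_minus_commute)
  have yz: "y = z + (s *\<^sub>R e + t *\<^sub>R u)" by (simp add: z_def)
  have "u \<bullet> u = 1" "e \<bullet> e = 1" using u e by (simp_all add: norm_eq_1)
  then have uy: "u \<bullet> y = t + u \<bullet> z" and ey: "e \<bullet> y = s + e \<bullet> z"
    using eu by (simp_all add: yz inner_add_right inner_commute)
  have uz: "\<bar>u \<bullet> z\<bar> \<le> \<rho>" and "\<bar>e \<bullet> z\<bar> \<le> \<rho>"
    using abs_inner_unit_le[OF u, of z] abs_inner_unit_le[OF e, of z] z by linarith+
  then show "\<bar>u \<bullet> y - t\<bar> \<le> \<rho>" "\<bar>e \<bullet> y - s\<bar> \<le> \<rho>" by (simp_all add: uy ey)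
  have "y - (u \<bullet> y) *\<^sub>R u = s *\<^sub>R e + (z - (u \<bullet> z) *\<^sub>R u)"
    unfolding uy by (subst yz) (simp add: algebra_simps)
  then have "norm (y - (u \<bullet> y) *\<^sub>R u) \<le> \<bar>s\<bar> + (norm z + \<bar>u \<bullet> z\<bar>)"
    using norm_triangle_ineq[of "s *\<^sub>R e" "z - (u \<bullet> z) *\<^sub>R u"] norm_triangle_ineq4[of z "(u \<bullet> z) *\<^sub>R u"] e u
    by simp
  then show "norm (y - (u \<bullet> y) *\<^sub>R u) \<le> \<bar>s\<bar> + 2 * \<rho>" using z uz by linarith
qed

lemma cball_subset_graph_tube:
  fixes u e :: "'a::euclidean_space"
  assumes u: "norm u = 1" and e: "norm e = 1" and eu: "e \<bullet> u = 0"
    and g: "contraction g" and "\<bar>s\<bar> + 2 * \<rho> \<le> R" "2 * \<rho> \<le> h"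
  shows "cball (s *\<^sub>R e + g s *\<^sub>R u) \<rho> \<subseteq> graph_tube u e R h g"
proof
  fix y assume "y \<in> cball (s *\<^sub>R e + g s *\<^sub>R u) \<rho>"
  note coords = cball_graph_coordinates[OF u e eu this]
  have "\<bar>g (e \<bullet> y) - g s\<bar> \<le> \<bar>e \<bullet> y - s\<bar>" using g unfolding contraction_def by blast
  then have "\<bar>u \<bullet> y - g (e \<bullet> y)\<bar> \<le> h" using coords(1,2) assms(6) by linarith
  with coords(3) assms(5) show "y \<in> graph_tube u e R h g" by (simp add: graph_tube_def)
qed

lemma cball_graph_tube_disjoint:
  fixes u e :: "'a::euclidean_space"
  assumes u: "norm u = 1" and e: "norm e = 1" and eu: "e \<bullet> u = 0"
    and g: "contraction g" and gap: "2 * \<rho> + h < \<bar>g s - t\<bar>"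
  shows "cball (s *\<^sub>R e + t *\<^sub>R u) \<rho> \<inter> graph_tube u e R h g = {}"
proof (intro equals0I)
  fix y assume "y \<in> cball (s *\<^sub>R e + t *\<^sub>R u) \<rho> \<inter> graph_tube u e R h g"
  then have y: "y \<in> cball (s *\<^sub>R e + t *\<^sub>R u) \<rho>" and "\<bar>u \<bullet> y - g (e \<bullet> y)\<bar> \<le> h"
    by (auto simp: graph_tube_def)
  moreover note coords = cball_graph_coordinates[OF u e eu y]
  moreover have "\<bar>g (e \<bullet> y) - g s\<bar> \<le> \<bar>e \<bullet> y - s\<bar>" using g unfolding contraction_def by blast
  ultimately show False using gap by linarith
qed

section \<open>The measure estimate\<close>

lemma ess_subset_trans:
  assumes "ess_subset A B" and "ess_subset B C"
  shows "ess_subset A C"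
proof -
  have "(A - B) \<union> (B - C) \<in> null_sets lebesgue"
    using assms unfolding ess_subset_def by (rule null_sets.Un)
  moreover have "A - C \<subseteq> (A - B) \<union> (B - C)" by blast
  ultimately show ?thesis unfolding ess_subset_def by (blast intro: null_sets_completion_subset)
qed

lemma emeasure_le_nn_integral_indicator_diff:
  assumes B: "B \<in> sets M" and C: "C \<in> sets M" and "B - C \<in> null_sets M" and "B \<inter> E = {}"
  shows "emeasure M B \<le> (\<integral>\<^sup>+ x. ennreal \<bar>indicator E x - indicator C x :: real\<bar> \<partial>M)"
proof -
  have "emeasure M B = emeasure M (B - (B - C))"
    using assms(3) B by (rule emeasure_Diff_null_set[symmetric])
  also have "B - (B - C) = B \<inter> C" by blast
  also have "emeasure M (B \<inter> C) = (\<integral>\<^sup>+ x. indicator (B \<inter> C) x \<partial>M)" using B C by simp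
  also have "\<dots> \<le> (\<integral>\<^sup>+ x. ennreal \<bar>indicator E x - indicator C x :: real\<bar> \<partial>M)"
    by (rule nn_integral_mono) (use assms(4) in \<open>auto simp: indicator_def\<close>)
  finally show ?thesis .
qed

lemma emeasure_lebesgue_cball_pos:
  "0 < \<rho> \<Longrightarrow> 0 < emeasure lebesgue (cball (c::'a::euclidean_space) \<rho>)"
  by (simp add: emeasure_cball)

lemma emeasure_lebesgue_cball_translate:
  "0 \<le> \<rho> \<Longrightarrow> emeasure lebesgue (cball (c::'a::euclidean_space) \<rho>) = emeasure lebesgue (cball (0::'a) \<rho>)"
  by (simp add: emeasure_cball)

lemma in_J_H_sets_lebesgue:
  assumes "in_J_H u t0 D" and "K \<in> convex_bodies"
  shows "D K \<in> sets lebesgue"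
proof -
  from assms(1) have "\<forall>K\<in>convex_bodies. D K \<in> finite_measure_sets"
    unfolding in_J_H_def by (elim conjE) assumption
  with assms(2) show ?thesis unfolding finite_measure_sets_def by blast
qed

lemma in_J_H_ess_mono:
  assumes "in_J_H u t0 D" and "K \<in> convex_bodies" "L \<in> convex_bodies" "K \<subseteq> L"
  shows "ess_subset (D K) (D L)"
proof -
  from assms(1) have "\<forall>K\<in>convex_bodies. \<forall>L\<in>convex_bodies. K \<subseteq> L \<longrightarrow> ess_subset (D K) (D L)"
    unfolding in_J_H_def by (elim conjE) assumption
  with assms(2-4) show ?thesis by blast
qed

lemma ball_measure_le_image_distance:
  fixes D :: "'a::euclidean_space set \<Rightarrow> 'a set" and u e :: 'a
  assumes u: "norm u = 1" and e: "norm e = 1" and eu: "e \<bullet> u = 0"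
    and J: "in_J_H u t0 D" and \<phi>: "is_phi_of u D \<phi>"
    and A: "graph_tube u e R h id \<in> convex_bodies"
    and \<psi>: "contraction \<psi>" and E: "E \<subseteq> graph_tube u e R h \<psi>"
    and \<rho>: "0 < \<rho>" and s: "\<bar>s\<bar> + 2 * \<rho> \<le> R" "2 * \<rho> \<le> h" "2 * \<rho> + h < \<bar>\<psi> s - \<phi> s\<bar>"
  shows "emeasure lebesgue (cball (0::'a) \<rho>) \<le>
    (\<integral>\<^sup>+ x. ennreal \<bar>indicator E x - indicator (D (graph_tube u e R h id)) x\<bar> \<partial>lebesgue)"
proof -
  define B0 B1 where "B0 = cball (s *\<^sub>R e + s *\<^sub>R u) \<rho>" and "B1 = cball (s *\<^sub>R e + \<phi> s *\<^sub>R u) \<rho>"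
  have "B0 \<subseteq> graph_tube u e R h id"
    using cball_subset_graph_tube[OF u e eu contraction_id s(1,2)] by (simp add: B0_def)
  moreover have "B0 \<in> convex_bodies" using \<rho> by (auto simp: B0_def convex_bodies_def)
  ultimately have "ess_subset (D B0) (D (graph_tube u e R h id))"
    by (rule in_J_H_ess_mono[OF J _ A, rotated])
  moreover have "u \<bullet> (s *\<^sub>R e) = 0" using eu by (simp add: inner_commute)
  then have "ess_eq (D B0) B1"
    using \<phi> \<rho> unfolding is_phi_of_def B0_def B1_def by blast
  ultimately have "ess_subset B1 (D (graph_tube u e R h id))"
    unfolding ess_eq_def by (blast intro: ess_subset_trans)
  then have "B1 - D (graph_tube u e R h id) \<in> null_sets lebesgue"
    unfolding ess_subset_def .
  moreover have "D (graph_tube u e R h id) \<in> sets lebesgue" by (rule in_J_H_sets_lebesgue[OF J A])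
  moreover have "B1 \<inter> E = {}"
    using cball_graph_tube_disjoint[OF u e eu \<psi>, of \<rho> h s "\<phi> s" R] s(3) E by (auto simp: B1_def)
  ultimately have "emeasure lebesgue B1 \<le>
      (\<integral>\<^sup>+ x. ennreal \<bar>indicator E x - indicator (D (graph_tube u e R h id)) x\<bar> \<partial>lebesgue)"
    by (intro emeasure_le_nn_integral_indicator_diff) (auto simp: B1_def)
  moreover have "emeasure lebesgue B1 = emeasure lebesgue (cball (0::'a) \<rho>)"
    unfolding B1_def using \<rho> by (intro emeasure_lebesgue_cball_translate) simp
  ultimately show ?thesis by simp
qed

lemma unit_orthogonal_exists:
  fixes u :: "'a::euclidean_space"
  assumes "DIM('a) \<ge> 2"
  obtains e :: 'a where "norm e = 1" and "e \<bullet> u = 0"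
proof -
  obtain e0 :: 'a where "e0 \<noteq> 0" "orthogonal u e0" using orthogonal_to_vector_exists[OF assms] by blast
  then show thesis
    by (intro that[of "e0 /\<^sub>R norm e0"]) (auto simp: orthogonal_def inner_commute)
qed

lemma polarization_compositions_bounded_away:
  fixes D :: "'a::euclidean_space set \<Rightarrow> 'a set" and u :: 'a
  assumes dim: "DIM('a) \<ge> 2" and u: "norm u = 1" and J: "in_J_H u t0 D"
    and \<phi>: "is_phi_of u D \<phi>" and not_I: "\<phi> \<notin> class_I"
  shows "\<exists>A\<in>convex_bodies. \<exists>M>0. \<forall>P\<in>polarization_compositions u.
    M \<le> (\<integral>\<^sup>+ x. ennreal \<bar>indicator (P A) x - indicator (D A) x\<bar> \<partial>lebesgue)"
proof -
  have "contraction \<phi>" using \<phi> by (simp add: is_phi_of_def)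
  then obtain a b where "uniformly_far_from_unit_slope_stretches \<phi> a b"
    using not_I by (rule uniformly_far_from_unit_slope_stretches_if_not_class_I)
  then obtain \<epsilon> where \<epsilon>: "0 < \<epsilon>" and far: "\<And>\<psi>. contraction \<psi> \<Longrightarrow> unit_slope_on_stretches \<psi> \<Longrightarrow>
      \<exists>s\<in>{a..b}. \<epsilon> < \<bar>\<psi> s - \<phi> s\<bar>"
    unfolding uniformly_far_from_unit_slope_stretches_def by blast
  obtain e where e: "norm e = 1" and eu: "e \<bullet> u = 0"
    using unit_orthogonal_exists[OF dim] by blast
  define R h \<rho> where "R = \<bar>a\<bar> + \<bar>b\<bar> + \<epsilon>" and "h = \<epsilon> / 2" and "\<rho> = \<epsilon> / 8"
  define A where "A = graph_tube u e R h id"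
  have A: "A \<in> convex_bodies"
    unfolding A_def using \<epsilon> by (intro graph_tube_id_convex_body[OF u e eu]) (auto simp: R_def h_def)
  have "emeasure lebesgue (cball (0::'a) \<rho>) \<le>
      (\<integral>\<^sup>+ x. ennreal \<bar>indicator (P A) x - indicator (D A) x\<bar> \<partial>lebesgue)"
    if P: "P \<in> polarization_compositions u" for P
  proof -
    obtain ps where "P = foldr (\<circ>) ps id" "set ps \<subseteq> parallel_polarizations u"
      using P unfolding polarization_compositions_def by blast
    then obtain \<psi> where \<psi>: "fold_composition \<psi>" and PA: "P A \<subseteq> graph_tube u e R h \<psi>"
      using polarization_composition_graph_tube[OF u eu, of ps R h id] unfolding A_def by auto
    obtain s where s: "s \<in> {a..b}" and gap: "\<epsilon> < \<bar>\<psi> s - \<phi> s\<bar>"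
      using far contraction_fold_composition[OF \<psi>] unit_slope_on_stretches_fold_composition[OF \<psi>] by blast
    have "\<bar>s\<bar> \<le> \<bar>a\<bar> + \<bar>b\<bar>" using s by auto
    then have "\<bar>s\<bar> + 2 * \<rho> \<le> R" "2 * \<rho> \<le> h" "2 * \<rho> + h < \<bar>\<psi> s - \<phi> s\<bar>" "0 < \<rho>"
      using \<epsilon> gap by (simp_all add: R_def h_def \<rho>_def)
    from ball_measure_le_image_distance[OF u e eu J \<phi> A[unfolded A_def] contraction_fold_composition[OF \<psi>] PA this(4,1-3)]
    show ?thesis unfolding A_def .
  qed
  moreover have "0 < emeasure lebesgue (cball (0::'a) \<rho>)"
    using \<epsilon> by (intro emeasure_lebesgue_cball_pos) (simp add: \<rho>_def)
  ultimately show ?thesis using A by blast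
qed

theorem theorem6p6:
  fixes D :: "'a::euclidean_space set \<Rightarrow> 'a set"
    and u :: 'a and t0 :: real and \<phi> :: "real \<Rightarrow> real"
  assumes "DIM('a) \<ge> 2"
    and "norm u = 1"
    and "in_J_H u t0 D"
    and "is_phi_of u D \<phi>"
    and "\<phi> \<notin> class_I"
  shows "\<not> weakly_approximable convex_bodies D (polarization_compositions u)"
proof
  assume approx: "weakly_approximable convex_bodies D (polarization_compositions u)"
  obtain A M where "A \<in> convex_bodies" "0 < M" and bound: "\<And>P. P \<in> polarization_compositions u \<Longrightarrow>
      M \<le> (\<integral>\<^sup>+ x. ennreal \<bar>indicator (P A) x - indicator (D A) x\<bar> \<partial>lebesgue)"
    using polarization_compositions_bounded_away[OF assms] by blast
  with approx obtain Dk where Dk: "\<And>k. Dk k \<in> polarization_compositions u"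
    and lim: "(\<lambda>k. \<integral>\<^sup>+ x. ennreal \<bar>indicator (Dk k A) x - indicator (D A) x\<bar> \<partial>lebesgue) \<longlonglongrightarrow> 0"
    unfolding weakly_approximable_def by blast
  from order_tendstoD(2)[OF lim \<open>0 < M\<close>] obtain k where
    "(\<integral>\<^sup>+ x. ennreal \<bar>indicator (Dk k A) x - indicator (D A) x\<bar> \<partial>lebesgue) < M"
    by (auto simp: eventually_sequentially)
  with leD[OF bound[OF Dk]] show False by contradiction
qed

end
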